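(* Let $T=(T,\eta,\mu)$ be a monad on a category $\mathbb{C}$ such that for every object $X$ the pair $\eta_{TX},T\eta_X:TX\to TTX$ has an equalizer $\theta_X:DX\to TX$, and let $D$ be the associated monad. Then $D$ is idempotent if and only if for every object $X$ the morphism $T\theta_X:TDX\to TTX$ is monic. In particular, $D$ is idempotent whenever $T$ maps regular monomorphisms to monomorphisms.
   Context: The monad $D$: for $g:Y\to Z$ in $\mathbb{C}$, $Dg:DY\to DZ$ is the unique morphism with $\theta_Z\circ Dg=Tg\circ\theta_Y$; the unit $e_X:X\to DX$ is the unique morphism with $\theta_X\circ e_X=\eta_X$; the multiplication $m_X:DDX\to DX$ is the unique morphism with $\theta_X\circ m_X=\mu_X\circ T\theta_X\circ\theta_{DX}$. (Equivalently, morphisms $X\to DY$ correspond, via composition with $\theta_Y$, to morphisms $f^\sharp:X\to TY$ with $\eta_{TY}\circ f^\sharp=T\eta_Y\circ f^\sharp$, and the Kleisli category of $D$ is the corresponding subcategory of $\mathsf{Kl}(T)$.) A monad is idempotent if its multiplication is a natural isomorphism. A regular monomorphism is a morphism which is an equalizer of some pair of morphisms. *)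

theory Defs
  imports Main
begin

text \<open>Categories, given explicitly by objects, arrows, domain, codomain, identities
and composition (Comp g f means g after f, defined when Cod f = Dom g).\<close>

record ('o, 'a) cat =
  Obj  :: "'o set"
  Arr  :: "'a set"
  Dom  :: "'a \<Rightarrow> 'o"
  Cod  :: "'a \<Rightarrow> 'o"
  Id   :: "'o \<Rightarrow> 'a"
  Comp :: "'a \<Rightarrow> 'a \<Rightarrow> 'a"

definition hom :: "('o, 'a) cat \<Rightarrow> 'o \<Rightarrow> 'o \<Rightarrow> 'a set" where
  "hom C X Y = {f \<in> Arr C. Dom C f = X \<and> Cod C f = Y}"

definition category :: "('o, 'a) cat \<Rightarrow> bool" where
  "category C \<longleftrightarrow>
     (\<forall>f \<in> Arr C. Dom C f \<in> Obj C \<and> Cod C f \<in> Obj C) \<and>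
     (\<forall>X \<in> Obj C. Id C X \<in> hom C X X) \<and>
     (\<forall>f \<in> Arr C. \<forall>g \<in> Arr C. Cod C f = Dom C g \<longrightarrow>
         Comp C g f \<in> hom C (Dom C f) (Cod C g)) \<and>
     (\<forall>f \<in> Arr C. \<forall>g \<in> Arr C. \<forall>h \<in> Arr C.
         Cod C f = Dom C g \<longrightarrow> Cod C g = Dom C h \<longrightarrow>
         Comp C h (Comp C g f) = Comp C (Comp C h g) f) \<and>
     (\<forall>f \<in> Arr C. Comp C (Id C (Cod C f)) f = f \<and> Comp C f (Id C (Dom C f)) = f)"

definition mono :: "('o, 'a) cat \<Rightarrow> 'a \<Rightarrow> bool" where
  "mono C f \<longleftrightarrow> f \<in> Arr C \<and>
     (\<forall>g \<in> Arr C. \<forall>h \<in> Arr C. Cod C g = Dom C f \<longrightarrow> Cod C h = Dom C f \<longrightarrow>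
        Dom C g = Dom C h \<longrightarrow> Comp C f g = Comp C f h \<longrightarrow> g = h)"

definition iso :: "('o, 'a) cat \<Rightarrow> 'a \<Rightarrow> bool" where
  "iso C f \<longleftrightarrow> f \<in> Arr C \<and>
     (\<exists>g \<in> hom C (Cod C f) (Dom C f).
        Comp C g f = Id C (Dom C f) \<and> Comp C f g = Id C (Cod C f))"

definition is_equalizer :: "('o, 'a) cat \<Rightarrow> 'a \<Rightarrow> 'a \<Rightarrow> 'a \<Rightarrow> bool" where
  "is_equalizer C f g e \<longleftrightarrow>
     f \<in> Arr C \<and> g \<in> Arr C \<and> Dom C f = Dom C g \<and> Cod C f = Cod C g \<and>
     e \<in> Arr C \<and> Cod C e = Dom C f \<and> Comp C f e = Comp C g e \<and>
     (\<forall>h \<in> Arr C. Cod C h = Dom C f \<longrightarrow> Comp C f h = Comp C g h \<longrightarrow>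
        (\<exists>!k. k \<in> hom C (Dom C h) (Dom C e) \<and> Comp C e k = h))"

definition regular_mono :: "('o, 'a) cat \<Rightarrow> 'a \<Rightarrow> bool" where
  "regular_mono C e \<longleftrightarrow> (\<exists>f g. is_equalizer C f g e)"

definition endofunctor :: "('o, 'a) cat \<Rightarrow> ('o \<Rightarrow> 'o) \<Rightarrow> ('a \<Rightarrow> 'a) \<Rightarrow> bool" where
  "endofunctor C TO TA \<longleftrightarrow>
     (\<forall>X \<in> Obj C. TO X \<in> Obj C) \<and>
     (\<forall>f \<in> Arr C. TA f \<in> hom C (TO (Dom C f)) (TO (Cod C f))) \<and>
     (\<forall>X \<in> Obj C. TA (Id C X) = Id C (TO X)) \<and>
     (\<forall>f \<in> Arr C. \<forall>g \<in> Arr C. Cod C f = Dom C g \<longrightarrow>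
        TA (Comp C g f) = Comp C (TA g) (TA f))"

definition monad ::
  "('o, 'a) cat \<Rightarrow> ('o \<Rightarrow> 'o) \<Rightarrow> ('a \<Rightarrow> 'a) \<Rightarrow> ('o \<Rightarrow> 'a) \<Rightarrow> ('o \<Rightarrow> 'a) \<Rightarrow> bool" where
  "monad C TO TA eta mu \<longleftrightarrow>
     category C \<and> endofunctor C TO TA \<and>
     (\<forall>X \<in> Obj C. eta X \<in> hom C X (TO X)) \<and>
     (\<forall>X \<in> Obj C. mu X \<in> hom C (TO (TO X)) (TO X)) \<and>
     (\<forall>f \<in> Arr C. Comp C (eta (Cod C f)) f = Comp C (TA f) (eta (Dom C f))) \<and>
     (\<forall>f \<in> Arr C. Comp C (mu (Cod C f)) (TA (TA f)) = Comp C (TA f) (mu (Dom C f))) \<and>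
     (\<forall>X \<in> Obj C. Comp C (mu X) (TA (mu X)) = Comp C (mu X) (mu (TO X))) \<and>
     (\<forall>X \<in> Obj C. Comp C (mu X) (eta (TO X)) = Id C (TO X)) \<and>
     (\<forall>X \<in> Obj C. Comp C (mu X) (TA (eta X)) = Id C (TO X))"

text \<open>The associated monad D, given a choice theta of equalizers
theta X : DX \<rightarrow> TX of eta_{TX}, T eta_X.  DX is the domain of theta X.\<close>

definition DO :: "('o, 'a) cat \<Rightarrow> ('o \<Rightarrow> 'a) \<Rightarrow> 'o \<Rightarrow> 'o" where
  "DO C theta X = Dom C (theta X)"

definition DA :: "('o, 'a) cat \<Rightarrow> ('a \<Rightarrow> 'a) \<Rightarrow> ('o \<Rightarrow> 'a) \<Rightarrow> 'a \<Rightarrow> 'a" where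
  "DA C TA theta g = (THE k. k \<in> hom C (DO C theta (Dom C g)) (DO C theta (Cod C g)) \<and>
       Comp C (theta (Cod C g)) k = Comp C (TA g) (theta (Dom C g)))"

definition D_unit :: "('o, 'a) cat \<Rightarrow> ('o \<Rightarrow> 'a) \<Rightarrow> ('o \<Rightarrow> 'a) \<Rightarrow> 'o \<Rightarrow> 'a" where
  "D_unit C eta theta X = (THE k. k \<in> hom C X (DO C theta X) \<and>
       Comp C (theta X) k = eta X)"

definition D_mult ::
  "('o, 'a) cat \<Rightarrow> ('a \<Rightarrow> 'a) \<Rightarrow> ('o \<Rightarrow> 'a) \<Rightarrow> ('o \<Rightarrow> 'a) \<Rightarrow> 'o \<Rightarrow> 'a" where
  "D_mult C TA mu theta X = (THE k. k \<in> hom C (DO C theta (DO C theta X)) (DO C theta X) \<and>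
       Comp C (theta X) k =
         Comp C (mu X) (Comp C (TA (theta X)) (theta (DO C theta X))))"

text \<open>A monad is idempotent iff its multiplication is a natural isomorphism;
naturality holds for any monad, so this means every component is an iso.\<close>
definition D_idempotent ::
  "('o, 'a) cat \<Rightarrow> ('a \<Rightarrow> 'a) \<Rightarrow> ('o \<Rightarrow> 'a) \<Rightarrow> ('o \<Rightarrow> 'a) \<Rightarrow> bool" where
  "D_idempotent C TA mu theta \<longleftrightarrow> (\<forall>X \<in> Obj C. iso C (D_mult C TA mu theta X))"

end

theory Submission
  imports Defs
begin

text \<open>Both \<open>e\<^bsub>DX\<^esub>\<close> and \<open>D e\<^sub>X\<close> are right inverses of \<open>m\<^sub>X\<close>.
If \<open>T \<theta>\<^sub>X\<close> is monic, naturality of \<open>\<eta>\<close> and the unit laws give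
\<open>T \<theta>\<^sub>X \<circ> \<eta>\<^bsub>DX\<^esub> \<circ> m\<^sub>X = T \<theta>\<^sub>X \<circ> \<theta>\<^bsub>DX\<^esub>\<close>; cancelling
\<open>T \<theta>\<^sub>X\<close> and then the monomorphism \<open>\<theta>\<^bsub>DX\<^esub>\<close> shows that \<open>e\<^bsub>DX\<^esub>\<close> is also a left inverse.
Conversely, if \<open>m\<^sub>X\<close> is invertible its two right inverses coincide, so
\<open>\<eta>\<^bsub>DX\<^esub> = \<theta>\<^bsub>DX\<^esub> \<circ> D e\<^sub>X = T e\<^sub>X \<circ> \<theta>\<^sub>X\<close>, and then \<open>\<mu>\<^bsub>DX\<^esub> \<circ> T T e\<^sub>X\<close> is a left
inverse of \<open>T \<theta>\<^sub>X\<close>. The last claim holds because every \<open>\<theta>\<^sub>X\<close> is an equalizer.\<close>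

locale categorical =
  fixes C :: "('o, 'a) cat"
  assumes category: "category C"
begin

abbreviation comp (infixr "\<cdot>" 55) where "g \<cdot> f \<equiv> Comp C g f"

lemma dom_obj [simp]: "f \<in> Arr C \<Longrightarrow> Dom C f \<in> Obj C"
  and cod_obj [simp]: "f \<in> Arr C \<Longrightarrow> Cod C f \<in> Obj C"
  using category by (auto simp: category_def)

lemma comp_arr [simp]: "f \<in> Arr C \<Longrightarrow> g \<in> Arr C \<Longrightarrow> Cod C f = Dom C g \<Longrightarrow> g \<cdot> f \<in> Arr C"
  and dom_comp [simp]: "f \<in> Arr C \<Longrightarrow> g \<in> Arr C \<Longrightarrow> Cod C f = Dom C g \<Longrightarrow> Dom C (g \<cdot> f) = Dom C f"
  and cod_comp [simp]: "f \<in> Arr C \<Longrightarrow> g \<in> Arr C \<Longrightarrow> Cod C f = Dom C g \<Longrightarrow> Cod C (g \<cdot> f) = Cod C g"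
  using category by (auto simp: category_def hom_def)

lemma comp_assoc [simp]:
  "\<lbrakk>f \<in> Arr C; g \<in> Arr C; h \<in> Arr C; Cod C f = Dom C g; Cod C g = Dom C h\<rbrakk>
   \<Longrightarrow> (h \<cdot> g) \<cdot> f = h \<cdot> g \<cdot> f"
  using category unfolding category_def by metis

lemma id_arr [simp]: "X \<in> Obj C \<Longrightarrow> Id C X \<in> Arr C"
  and dom_id [simp]: "X \<in> Obj C \<Longrightarrow> Dom C (Id C X) = X"
  and cod_id [simp]: "X \<in> Obj C \<Longrightarrow> Cod C (Id C X) = X"
  using category by (auto simp: category_def hom_def)

lemma comp_id_left [simp]: "f \<in> Arr C \<Longrightarrow> Cod C f = X \<Longrightarrow> Id C X \<cdot> f = f"
  and comp_id_right [simp]: "f \<in> Arr C \<Longrightarrow> Dom C f = X \<Longrightarrow> f \<cdot> Id C X = f"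
  using category by (auto simp: category_def)

lemma comp_extend:
  "\<lbrakk>g \<cdot> f = h; f \<in> Arr C; g \<in> Arr C; k \<in> Arr C; Cod C f = Dom C g; Cod C k = Dom C f\<rbrakk>
   \<Longrightarrow> g \<cdot> f \<cdot> k = h \<cdot> k"
  by (metis comp_assoc)

lemma monoD:
  "\<lbrakk>mono C f; g \<in> Arr C; h \<in> Arr C; Cod C g = Dom C f; Cod C h = Dom C f; Dom C g = Dom C h;
    f \<cdot> g = f \<cdot> h\<rbrakk> \<Longrightarrow> g = h"
  unfolding mono_def by blast

lemma mono_if_left_inverse:
  assumes f: "f \<in> Arr C" and r: "r \<in> Arr C" "Dom C r = Cod C f"
    and inverse: "r \<cdot> f = Id C (Dom C f)"
  shows "mono C f"
  unfolding mono_def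
proof (intro conjI ballI impI)
  fix g h
  assume g: "g \<in> Arr C" "Cod C g = Dom C f" and h: "h \<in> Arr C" "Cod C h = Dom C f"
    and "f \<cdot> g = f \<cdot> h"
  then have "r \<cdot> f \<cdot> g = r \<cdot> f \<cdot> h" by simp
  then show "g = h"
    using comp_extend[OF inverse, of g] comp_extend[OF inverse, of h] f r g h by simp
qed (fact f)

lemma iso_if_inverses:
  assumes f: "f \<in> Arr C" and g: "g \<in> hom C (Cod C f) (Dom C f)"
    and "g \<cdot> f = Id C (Dom C f)" and "f \<cdot> g = Id C (Cod C f)"
  shows "iso C f"
  using assms unfolding iso_def by blast

lemma right_inverses_of_iso_eq:
  assumes "iso C f"
    and g: "g \<in> hom C (Cod C f) (Dom C f)" "f \<cdot> g = Id C (Cod C f)"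
    and h: "h \<in> hom C (Cod C f) (Dom C f)" "f \<cdot> h = Id C (Cod C f)"
  shows "g = h"
proof -
  obtain i where f: "f \<in> Arr C" and i: "i \<in> hom C (Cod C f) (Dom C f)"
    and left: "i \<cdot> f = Id C (Dom C f)"
    using \<open>iso C f\<close> unfolding iso_def by blast
  have "g = i \<cdot> f \<cdot> g" "h = i \<cdot> f \<cdot> h"
    using comp_extend[OF left, of g] comp_extend[OF left, of h] f g h i by (simp_all add: hom_def)
  then show ?thesis
    using f g h i by (simp add: hom_def)
qed

lemma equalizer_lift:
  "\<lbrakk>is_equalizer C f g e; h \<in> Arr C; Cod C h = Dom C f; f \<cdot> h = g \<cdot> h\<rbrakk>
   \<Longrightarrow> \<exists>!k. k \<in> hom C (Dom C h) (Dom C e) \<and> e \<cdot> k = h"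
  unfolding is_equalizer_def by blast

lemma equalizer_mono:
  assumes equalizer: "is_equalizer C f g e"
  shows "mono C e"
  unfolding mono_def
proof (intro conjI ballI impI)
  show e: "e \<in> Arr C" using equalizer by (simp add: is_equalizer_def)
  fix k l
  assume k: "k \<in> Arr C" "Cod C k = Dom C e" and l: "l \<in> Arr C" "Cod C l = Dom C e"
    and "Dom C k = Dom C l" and "e \<cdot> k = e \<cdot> l"
  have fg: "f \<in> Arr C" "g \<in> Arr C" "Dom C f = Cod C e" "Dom C g = Cod C e" "f \<cdot> e = g \<cdot> e"
    using equalizer by (auto simp: is_equalizer_def)
  have "f \<cdot> e \<cdot> k = g \<cdot> e \<cdot> k"
    using comp_extend[OF fg(5), of k] fg e k by simp
  then have "\<exists>!j. j \<in> hom C (Dom C (e \<cdot> k)) (Dom C e) \<and> e \<cdot> j = e \<cdot> k"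
    by (intro equalizer_lift[OF equalizer]) (use e fg k in auto)
  moreover have "k \<in> hom C (Dom C k) (Dom C e)" "l \<in> hom C (Dom C k) (Dom C e)"
    using k l \<open>Dom C k = Dom C l\<close> by (auto simp: hom_def)
  ultimately show "k = l"
    using e k \<open>e \<cdot> k = e \<cdot> l\<close> by (simp add: hom_def) blast
qed

end

locale monad_with_equalizers =
  fixes C :: "('o, 'a) cat"
    and TO :: "'o \<Rightarrow> 'o" and TA :: "'a \<Rightarrow> 'a"
    and eta mu theta :: "'o \<Rightarrow> 'a"
  assumes monad: "monad C TO TA eta mu"
    and equalizer: "\<forall>X \<in> Obj C. is_equalizer C (eta (TO X)) (TA (eta X)) (theta X)"
begin

sublocale categorical C
  using monad by unfold_locales (simp add: monad_def)

abbreviation D where "D \<equiv> DO C theta"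
abbreviation e where "e \<equiv> D_unit C eta theta"
abbreviation m where "m \<equiv> D_mult C TA mu theta"

lemma TO_obj [simp]: "X \<in> Obj C \<Longrightarrow> TO X \<in> Obj C"
  using monad by (simp add: monad_def endofunctor_def)

lemma TA_arr [simp]: "f \<in> Arr C \<Longrightarrow> TA f \<in> Arr C"
  and dom_TA [simp]: "f \<in> Arr C \<Longrightarrow> Dom C (TA f) = TO (Dom C f)"
  and cod_TA [simp]: "f \<in> Arr C \<Longrightarrow> Cod C (TA f) = TO (Cod C f)"
  using monad by (auto simp: monad_def endofunctor_def hom_def)

lemma TA_comp: "f \<in> Arr C \<Longrightarrow> g \<in> Arr C \<Longrightarrow> Cod C f = Dom C g \<Longrightarrow> TA (g \<cdot> f) = TA g \<cdot> TA f"
  and TA_id: "X \<in> Obj C \<Longrightarrow> TA (Id C X) = Id C (TO X)"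
  using monad by (auto simp: monad_def endofunctor_def)

lemma eta_arr [simp]: "X \<in> Obj C \<Longrightarrow> eta X \<in> Arr C"
  and dom_eta [simp]: "X \<in> Obj C \<Longrightarrow> Dom C (eta X) = X"
  and cod_eta [simp]: "X \<in> Obj C \<Longrightarrow> Cod C (eta X) = TO X"
  and mu_arr [simp]: "X \<in> Obj C \<Longrightarrow> mu X \<in> Arr C"
  and dom_mu [simp]: "X \<in> Obj C \<Longrightarrow> Dom C (mu X) = TO (TO X)"
  and cod_mu [simp]: "X \<in> Obj C \<Longrightarrow> Cod C (mu X) = TO X"
  using monad by (auto simp: monad_def hom_def)

lemma eta_natural: "f \<in> Arr C \<Longrightarrow> eta (Cod C f) \<cdot> f = TA f \<cdot> eta (Dom C f)"
  and mu_natural: "f \<in> Arr C \<Longrightarrow> mu (Cod C f) \<cdot> TA (TA f) = TA f \<cdot> mu (Dom C f)"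
  and mu_eta_T: "X \<in> Obj C \<Longrightarrow> mu X \<cdot> eta (TO X) = Id C (TO X)"
  and mu_T_eta: "X \<in> Obj C \<Longrightarrow> mu X \<cdot> TA (eta X) = Id C (TO X)"
  using monad by (auto simp: monad_def)

lemma theta_equalizer: "X \<in> Obj C \<Longrightarrow> is_equalizer C (eta (TO X)) (TA (eta X)) (theta X)"
  using equalizer by blast

lemma theta_arr [simp]: "X \<in> Obj C \<Longrightarrow> theta X \<in> Arr C"
  and dom_theta [simp]: "X \<in> Obj C \<Longrightarrow> Dom C (theta X) = D X"
  and cod_theta [simp]: "X \<in> Obj C \<Longrightarrow> Cod C (theta X) = TO X"
  using theta_equalizer by (auto simp: is_equalizer_def DO_def)

lemma D_obj [simp]: "X \<in> Obj C \<Longrightarrow> D X \<in> Obj C"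
  using dom_obj[OF theta_arr] by simp

lemma theta_cancel:
  "\<lbrakk>X \<in> Obj C; g \<in> Arr C; h \<in> Arr C; Cod C g = D X; Cod C h = D X; Dom C g = Dom C h;
    theta X \<cdot> g = theta X \<cdot> h\<rbrakk> \<Longrightarrow> g = h"
  using monoD[OF equalizer_mono[OF theta_equalizer]] by simp

definition equalizes :: "'o \<Rightarrow> 'a \<Rightarrow> bool" where
  "equalizes X h \<longleftrightarrow> h \<in> Arr C \<and> Cod C h = TO X \<and> eta (TO X) \<cdot> h = TA (eta X) \<cdot> h"

lemma equalizes_theta: "X \<in> Obj C \<Longrightarrow> equalizes X (theta X)"
  using theta_equalizer by (simp add: equalizes_def is_equalizer_def)

lemma equalizes_eta: "X \<in> Obj C \<Longrightarrow> equalizes X (eta X)"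
  using eta_natural[of "eta X"] by (simp add: equalizes_def)

lemma equalizes_TA_comp:
  assumes f: "f \<in> Arr C" and h: "equalizes (Dom C f) h"
  shows "equalizes (Cod C f) (TA f \<cdot> h)"
proof -
  have h_arr: "h \<in> Arr C" "Cod C h = TO (Dom C f)"
    and h_eq: "eta (TO (Dom C f)) \<cdot> h = TA (eta (Dom C f)) \<cdot> h"
    using h by (simp_all add: equalizes_def)
  have T_eta_natural: "TA (eta (Cod C f)) \<cdot> TA f = TA (TA f) \<cdot> TA (eta (Dom C f))"
    using f eta_natural[OF f] TA_comp[of f "eta (Cod C f)"] TA_comp[of "eta (Dom C f)" "TA f"]
    by simp
  have "eta (TO (Cod C f)) \<cdot> TA f \<cdot> h = TA (TA f) \<cdot> eta (TO (Dom C f)) \<cdot> h"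
    using comp_extend[OF eta_natural[OF TA_arr[OF f]], of h] f h_arr by simp
  also have "\<dots> = TA (TA f) \<cdot> TA (eta (Dom C f)) \<cdot> h"
    by (simp only: h_eq)
  also have "\<dots> = TA (eta (Cod C f)) \<cdot> TA f \<cdot> h"
    using comp_extend[OF T_eta_natural, of h] f h_arr by simp
  finally show ?thesis
    using f h_arr by (simp add: equalizes_def)
qed

lemma eta_T_mu_comp:
  assumes X: "X \<in> Obj C" and h: "equalizes (TO X) h"
  shows "eta (TO X) \<cdot> mu X \<cdot> h = h"
proof -
  have h_arr: "h \<in> Arr C" "Cod C h = TO (TO X)"
    and h_eq: "eta (TO (TO X)) \<cdot> h = TA (eta (TO X)) \<cdot> h"
    using h by (simp_all add: equalizes_def)
  have T_mu_eta_T: "TA (mu X) \<cdot> TA (eta (TO X)) = Id C (TO (TO X))"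
    using X TA_comp[of "eta (TO X)" "mu X"] mu_eta_T[OF X] TA_id by simp
  have "eta (TO X) \<cdot> mu X \<cdot> h = TA (mu X) \<cdot> eta (TO (TO X)) \<cdot> h"
    using comp_extend[OF eta_natural[OF mu_arr[OF X]], of h] X h_arr by simp
  also have "\<dots> = TA (mu X) \<cdot> TA (eta (TO X)) \<cdot> h"
    by (simp only: h_eq)
  also have "\<dots> = h"
    using comp_extend[OF T_mu_eta_T, of h] X h_arr by simp
  finally show ?thesis .
qed

lemma T_eta_mu_comp:
  assumes X: "X \<in> Obj C" and h: "h \<in> Arr C" "Cod C h = TO (TO X)"
    and h_eq: "TA (TA (eta X)) \<cdot> h = TA (eta (TO X)) \<cdot> h"
  shows "TA (eta X) \<cdot> mu X \<cdot> h = h"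
proof -
  have "TA (eta X) \<cdot> mu X \<cdot> h = mu (TO X) \<cdot> TA (TA (eta X)) \<cdot> h"
    using comp_extend[OF mu_natural[OF eta_arr[OF X]], of h] X h by simp
  also have "\<dots> = mu (TO X) \<cdot> TA (eta (TO X)) \<cdot> h"
    by (simp only: h_eq)
  also have "\<dots> = h"
    using comp_extend[OF mu_T_eta[OF TO_obj[OF X]], of h] X h by simp
  finally show ?thesis .
qed

lemma equalizes_mu_comp:
  assumes X: "X \<in> Obj C" and h: "equalizes (TO X) h"
    and h_eq: "TA (TA (eta X)) \<cdot> h = TA (eta (TO X)) \<cdot> h"
  shows "equalizes X (mu X \<cdot> h)"
proof -
  have h_arr: "h \<in> Arr C" "Cod C h = TO (TO X)"
    using h by (simp_all add: equalizes_def)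
  show ?thesis
    using eta_T_mu_comp[OF X h] T_eta_mu_comp[OF X h_arr h_eq] X h_arr
    by (simp add: equalizes_def)
qed

lemma theta_lift:
  assumes X: "X \<in> Obj C" and h: "equalizes X h"
  defines "k \<equiv> THE k. k \<in> hom C (Dom C h) (D X) \<and> theta X \<cdot> k = h"
  shows "k \<in> hom C (Dom C h) (D X)" and "theta X \<cdot> k = h"
proof -
  have "\<exists>!k. k \<in> hom C (Dom C h) (D X) \<and> theta X \<cdot> k = h"
    using equalizer_lift[OF theta_equalizer[OF X]] h X by (simp add: equalizes_def)
  then have "k \<in> hom C (Dom C h) (D X) \<and> theta X \<cdot> k = h"
    unfolding k_def by (rule theI')
  then show "k \<in> hom C (Dom C h) (D X)" and "theta X \<cdot> k = h"
    by simp_all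
qed

lemma
  assumes X: "X \<in> Obj C"
  shows D_unit_arr [simp]: "e X \<in> Arr C"
    and dom_D_unit [simp]: "Dom C (e X) = X"
    and cod_D_unit [simp]: "Cod C (e X) = D X"
    and theta_D_unit: "theta X \<cdot> e X = eta X"
  using theta_lift[OF X equalizes_eta[OF X]] X unfolding D_unit_def hom_def by simp_all

lemma
  assumes f: "f \<in> Arr C"
  shows DA_arr [simp]: "DA C TA theta f \<in> Arr C"
    and dom_DA [simp]: "Dom C (DA C TA theta f) = D (Dom C f)"
    and cod_DA [simp]: "Cod C (DA C TA theta f) = D (Cod C f)"
    and theta_DA: "theta (Cod C f) \<cdot> DA C TA theta f = TA f \<cdot> theta (Dom C f)"
  using theta_lift[OF cod_obj[OF f] equalizes_TA_comp[OF f equalizes_theta[OF dom_obj[OF f]]]] f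
  unfolding DA_def hom_def by simp_all

lemma equalizes_D_mult:
  assumes X: "X \<in> Obj C"
  shows "equalizes X (mu X \<cdot> TA (theta X) \<cdot> theta (D X))"
proof (rule equalizes_mu_comp[OF X])
  show "equalizes (TO X) (TA (theta X) \<cdot> theta (D X))"
    using equalizes_TA_comp[OF theta_arr[OF X]] equalizes_theta X by simp
  have T_theta_eq: "TA (TA (eta X)) \<cdot> TA (theta X) = TA (eta (TO X)) \<cdot> TA (theta X)"
    using theta_equalizer[OF X] X TA_comp[of "theta X" "TA (eta X)"] TA_comp[of "theta X" "eta (TO X)"]
    by (simp add: is_equalizer_def)
  show "TA (TA (eta X)) \<cdot> TA (theta X) \<cdot> theta (D X)
      = TA (eta (TO X)) \<cdot> TA (theta X) \<cdot> theta (D X)"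
    using comp_extend[OF T_theta_eq, of "theta (D X)"] X by simp
qed

lemma
  assumes X: "X \<in> Obj C"
  shows D_mult_arr [simp]: "m X \<in> Arr C"
    and dom_D_mult [simp]: "Dom C (m X) = D (D X)"
    and cod_D_mult [simp]: "Cod C (m X) = D X"
    and theta_D_mult: "theta X \<cdot> m X = mu X \<cdot> TA (theta X) \<cdot> theta (D X)"
  using theta_lift[OF X equalizes_D_mult[OF X]] X unfolding D_mult_def hom_def by simp_all

lemma D_mult_D_unit:
  assumes X: "X \<in> Obj C"
  shows "m X \<cdot> e (D X) = Id C (D X)"
proof (rule theta_cancel[OF X])
  have "theta X \<cdot> m X \<cdot> e (D X) = mu X \<cdot> TA (theta X) \<cdot> theta (D X) \<cdot> e (D X)"
    using comp_extend[OF theta_D_mult[OF X], of "e (D X)"] X by simp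
  also have "\<dots> = mu X \<cdot> TA (theta X) \<cdot> eta (D X)"
    using X by (simp add: theta_D_unit)
  also have "\<dots> = mu X \<cdot> eta (TO X) \<cdot> theta X"
    using eta_natural[OF theta_arr[OF X]] X by simp
  also have "\<dots> = theta X"
    using comp_extend[OF mu_eta_T[OF X], of "theta X"] X by simp
  finally show "theta X \<cdot> m X \<cdot> e (D X) = theta X \<cdot> Id C (D X)"
    using X by simp
qed (use X in simp_all)

lemma D_mult_DA_D_unit:
  assumes X: "X \<in> Obj C"
  shows "m X \<cdot> DA C TA theta (e X) = Id C (D X)"
proof (rule theta_cancel[OF X])
  have T_theta_D_unit: "TA (theta X) \<cdot> TA (e X) = TA (eta X)"
    using TA_comp[of "e X" "theta X"] X by (simp add: theta_D_unit)
  have "theta X \<cdot> m X \<cdot> DA C TA theta (e X)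
      = mu X \<cdot> TA (theta X) \<cdot> theta (D X) \<cdot> DA C TA theta (e X)"
    using comp_extend[OF theta_D_mult[OF X], of "DA C TA theta (e X)"] X by simp
  also have "\<dots> = mu X \<cdot> TA (theta X) \<cdot> TA (e X) \<cdot> theta X"
    using theta_DA[of "e X"] X by simp
  also have "\<dots> = mu X \<cdot> TA (eta X) \<cdot> theta X"
    using comp_extend[OF T_theta_D_unit, of "theta X"] X by simp
  also have "\<dots> = theta X"
    using comp_extend[OF mu_T_eta[OF X], of "theta X"] X by simp
  finally show "theta X \<cdot> m X \<cdot> DA C TA theta (e X) = theta X \<cdot> Id C (D X)"
    using X by simp
qed (use X in simp_all)

lemma D_unit_D_mult_if_mono_T_theta:
  assumes X: "X \<in> Obj C" and mono: "mono C (TA (theta X))"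
  shows "e (D X) \<cdot> m X = Id C (D (D X))"
proof (rule theta_cancel[OF D_obj[OF X]])
  have "TA (theta X) \<cdot> eta (D X) \<cdot> m X = eta (TO X) \<cdot> theta X \<cdot> m X"
    using comp_extend[OF eta_natural[OF theta_arr[OF X]], of "m X"] X by simp
  also have "\<dots> = eta (TO X) \<cdot> mu X \<cdot> TA (theta X) \<cdot> theta (D X)"
    using X by (simp add: theta_D_mult)
  also have "\<dots> = TA (theta X) \<cdot> theta (D X)"
    using eta_T_mu_comp X equalizes_TA_comp[OF theta_arr[OF X]] equalizes_theta by simp
  finally have "eta (D X) \<cdot> m X = theta (D X)"
    using monoD[OF mono] X by simp
  then show "theta (D X) \<cdot> e (D X) \<cdot> m X = theta (D X) \<cdot> Id C (D (D X))"
    using comp_extend[OF theta_D_unit[OF D_obj[OF X]], of "m X"] X by simp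
qed (use X in simp_all)

lemma D_mult_iso_if_mono_T_theta:
  "X \<in> Obj C \<Longrightarrow> mono C (TA (theta X)) \<Longrightarrow> iso C (m X)"
  by (rule iso_if_inverses[of _ "e (D X)"])
    (simp_all add: hom_def D_mult_D_unit D_unit_D_mult_if_mono_T_theta)

lemma mono_T_theta_if_D_mult_iso:
  assumes X: "X \<in> Obj C" and iso: "iso C (m X)"
  shows "mono C (TA (theta X))"
proof (rule mono_if_left_inverse)
  have "e (D X) = DA C TA theta (e X)"
    using right_inverses_of_iso_eq[OF iso] D_mult_D_unit D_mult_DA_D_unit X by (simp add: hom_def)
  then have "eta (D X) = TA (e X) \<cdot> theta X"
    using theta_D_unit[OF D_obj[OF X]] theta_DA[of "e X"] X by simp
  then have "TA (TA (e X)) \<cdot> TA (theta X) = TA (eta (D X))"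
    using TA_comp[of "theta X" "TA (e X)"] X by simp
  then show "(mu (D X) \<cdot> TA (TA (e X))) \<cdot> TA (theta X) = Id C (Dom C (TA (theta X)))"
    using mu_T_eta[OF D_obj[OF X]] X by simp
qed (use X in simp_all)

end

theorem lemma5p7:
  fixes C :: "('o, 'a) cat"
    and TO :: "'o \<Rightarrow> 'o" and TA :: "'a \<Rightarrow> 'a"
    and eta mu theta :: "'o \<Rightarrow> 'a"
  assumes "monad C TO TA eta mu"
    and "\<forall>X \<in> Obj C. is_equalizer C (eta (TO X)) (TA (eta X)) (theta X)"
  shows "(D_idempotent C TA mu theta \<longleftrightarrow> (\<forall>X \<in> Obj C. mono C (TA (theta X))))
       \<and> ((\<forall>e. regular_mono C e \<longrightarrow> mono C (TA e)) \<longrightarrow> D_idempotent C TA mu theta)"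
proof -
  interpret monad_with_equalizers C TO TA eta mu theta
    using assms by unfold_locales
  have idempotent_iff: "D_idempotent C TA mu theta \<longleftrightarrow> (\<forall>X \<in> Obj C. mono C (TA (theta X)))"
    unfolding D_idempotent_def
    using D_mult_iso_if_mono_T_theta mono_T_theta_if_D_mult_iso by blast
  have "\<forall>X \<in> Obj C. regular_mono C (theta X)"
    using theta_equalizer by (auto simp: regular_mono_def)
  then show ?thesis
    using idempotent_iff by blast
qed

end
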